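(* Let $(\Gamma,M)$ be an E-GCM graph with Coxeter group $W$, and let $J\subseteq I_n$ be such that the parabolic subgroup $W_J$ is finite. Let $s_{i_p}\cdots s_{i_2}s_{i_1}$ be any reduced expression for an element of $W^J$, and let $\lambda\in C_J$. Then for each $1\le q\le p$, $(\gamma_{i_1},\dots,\gamma_{i_q})$ is a legal sequence of node firings in a numbers game played from the initial position $\lambda$ (i.e. for each $q$, the population at $\gamma_{i_q}$ is positive after firing $\gamma_{i_1},\dots,\gamma_{i_{q-1}}$ in order).
   Context: E-GCM $M=(M_{ij})_{i,j\in I_n}$: real, $M_{ii}=2$, $M_{ij}\le0$ ($i\ne j$), $M_{ij}\ne0\iff M_{ji}\ne0$, nonzero $M_{ij}M_{ji}$ either $\ge4$ or $=4\cos^2(\pi/m)$ with $m\ge3$ integer; E-GCM graph with nodes $\gamma_i$, adjacent iff $M_{ij}\ne0$. Positions $\lambda=(\lambda_i)\in\mathbb{R}^n$; firing $\gamma_i$ is allowed iff $\lambda_i>0$ and replaces each $\lambda_j$ by $\lambda_j-M_{ij}\lambda_i$. $W$: Coxeter group with generators $s_i$, $s_i^2=e$, $(s_is_j)^{m_{ij}}=e$, $m_{ij}=k$ if $M_{ij}M_{ji}=4\cos^2(\pi/k)$ ($k\ge2$), $m_{ij}=\infty$ if $M_{ij}M_{ji}\ge4$; $\ell$ = length. For $J\subseteq I_n$, $W_J$ is the subgroup generated by $\{s_j\}_{j\in J}$ and $W^J=\{w\in W:\ell(ws_j)>\ell(w)\ \forall j\in J\}$. $C_J$ is the set of positions $\lambda$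 with $\lambda_j=0$ for $j\in J$ and $\lambda_i>0$ for $i\notin J$. *)

theory Defs
  imports Complex_Main
begin

text \<open>Index set I_n is rendered as {..<n} (nodes 0,...,n-1). A matrix is a function
  M :: nat => nat => real; only entries with indices < n matter.\<close>

definition is_egcm :: "nat \<Rightarrow> (nat \<Rightarrow> nat \<Rightarrow> real) \<Rightarrow> bool" where
  "is_egcm n M \<longleftrightarrow>
     (\<forall>i<n. M i i = 2) \<and>
     (\<forall>i<n. \<forall>j<n. i \<noteq> j \<longrightarrow> M i j \<le> 0) \<and>
     (\<forall>i<n. \<forall>j<n. M i j \<noteq> 0 \<longleftrightarrow> M j i \<noteq> 0) \<and>
     (\<forall>i<n. \<forall>j<n. i \<noteq> j \<longrightarrow> M i j * M j i \<noteq> 0 \<longrightarrow>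
        (M i j * M j i \<ge> 4 \<or> (\<exists>m::nat. m \<ge> 3 \<and> M i j * M j i = 4 * (cos (pi / real m))\<^sup>2)))"

text \<open>Relators of the Coxeter presentation, as words (lists of generator indices):
  s_i s_i, and (s_i s_j)^k whenever i \<noteq> j and M_ij M_ji = 4 cos^2(pi/k), k \<ge> 2
  (i.e. m_ij = k). No relator when M_ij M_ji \<ge> 4 (m_ij = infinity).\<close>

inductive cox_relator :: "nat \<Rightarrow> (nat \<Rightarrow> nat \<Rightarrow> real) \<Rightarrow> nat list \<Rightarrow> bool"
  for n M where
  sq: "i < n \<Longrightarrow> cox_relator n M [i, i]"
| braid: "i < n \<Longrightarrow> j < n \<Longrightarrow> i \<noteq> j \<Longrightarrow> k \<ge> 2 \<Longrightarrow>
          M i j * M j i = 4 * (cos (pi / real k))\<^sup>2 \<Longrightarrow>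
          cox_relator n M (concat (replicate k [i, j]))"

text \<open>Two words represent the same element of the Coxeter group W iff they are related
  by the congruence generated by the relators.\<close>

inductive cox_eq :: "nat \<Rightarrow> (nat \<Rightarrow> nat \<Rightarrow> real) \<Rightarrow> nat list \<Rightarrow> nat list \<Rightarrow> bool"
  for n M where
  refl: "cox_eq n M u u"
| sym: "cox_eq n M u v \<Longrightarrow> cox_eq n M v u"
| trans: "cox_eq n M u v \<Longrightarrow> cox_eq n M v w \<Longrightarrow> cox_eq n M u w"
| del: "cox_relator n M r \<Longrightarrow> cox_eq n M (a @ r @ b) (a @ b)"

definition cox_rel :: "nat \<Rightarrow> (nat \<Rightarrow> nat \<Rightarrow> real) \<Rightarrow> (nat list \<times> nat list) set" where
  "cox_rel n M = {(u, v). cox_eq n M u v}"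

definition parabolic :: "nat \<Rightarrow> (nat \<Rightarrow> nat \<Rightarrow> real) \<Rightarrow> nat set \<Rightarrow> nat list set set" where
  "parabolic n M J = {u. set u \<subseteq> J} // cox_rel n M"

definition cox_len :: "nat \<Rightarrow> (nat \<Rightarrow> nat \<Rightarrow> real) \<Rightarrow> nat list \<Rightarrow> nat" where
  "cox_len n M u = (LEAST k. \<exists>v. length v = k \<and> cox_eq n M u v)"

definition reduced :: "nat \<Rightarrow> (nat \<Rightarrow> nat \<Rightarrow> real) \<Rightarrow> nat list \<Rightarrow> bool" where
  "reduced n M w \<longleftrightarrow> set w \<subseteq> {..<n} \<and> length w = cox_len n M w"

definition in_min_coset :: "nat \<Rightarrow> (nat \<Rightarrow> nat \<Rightarrow> real) \<Rightarrow> nat set \<Rightarrow> nat list \<Rightarrow> bool" where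
  "in_min_coset n M J w \<longleftrightarrow> (\<forall>j\<in>J. cox_len n M (w @ [j]) > cox_len n M w)"

definition fire :: "(nat \<Rightarrow> nat \<Rightarrow> real) \<Rightarrow> (nat \<Rightarrow> real) \<Rightarrow> nat \<Rightarrow> (nat \<Rightarrow> real)" where
  "fire M lam i = (\<lambda>j. lam j - M i j * lam i)"

fun legal :: "(nat \<Rightarrow> nat \<Rightarrow> real) \<Rightarrow> (nat \<Rightarrow> real) \<Rightarrow> nat list \<Rightarrow> bool" where
  "legal M lam [] = True"
| "legal M lam (i # is) = (lam i > 0 \<and> legal M (fire M lam i) is)"

definition cone_C :: "nat \<Rightarrow> nat set \<Rightarrow> (nat \<Rightarrow> real) set" where
  "cone_C n J = {lam. (\<forall>j\<in>J. lam j = 0) \<and> (\<forall>i\<in>{..<n} - J. lam i > 0)}"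

end

theory Submission
  imports Defs
begin

(*
  Read a position lam as the linear form b \<mapsto> \<Sum>l. lam l * b l on coefficient vectors of the
  simple roots. Firing a node is dual to the corresponding reflection of the geometric
  representation, so the population at node i after firing xs is the value of lam at the
  root x \<alpha>_i, where x is the product of the reflections of xs. For a prefix xs @ [i] of the
  reversed reduced word, x s_i is reduced, so x \<alpha>_i is a nonnegative combination of simple
  roots (positivity of roots, by induction on length with the rank-two case computed through
  Chebyshev polynomials). The suffix v = s_i x^-1 of w lies in W^J and maps x \<alpha>_i to -\<alpha>_i,
  whereas it maps every \<alpha>_j with j in J to a nonnegative root; hence x \<alpha>_i has a positive
  coefficient outside J, where lam is positive.
*)

section \<open>Words and lengths in the Coxeter group\<close>

declare cox_eq.trans [trans]

lemma cox_eq_append_cong: "cox_eq n M u v \<Longrightarrow> cox_eq n M (p @ u @ s) (p @ v @ s)"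
proof (induction rule: cox_eq.induct)
  case (del r a b)
  have "cox_eq n M ((p @ a) @ r @ (b @ s)) ((p @ a) @ (b @ s))"
    by (rule cox_eq.del[OF del])
  then show ?case by simp
qed (auto intro: cox_eq.intros)

lemma cox_eq_append: "cox_eq n M u u' \<Longrightarrow> cox_eq n M v v' \<Longrightarrow> cox_eq n M (u @ v) (u' @ v')"
  by (metis append.right_neutral append_Nil cox_eq.trans cox_eq_append_cong)

lemma cox_eq_cancel_square: "i < n \<Longrightarrow> cox_eq n M (a @ [i, i] @ b) (a @ b)"
  by (rule cox_eq.del) (rule cox_relator.sq)

lemma set_concat_replicate_pair: "set (concat (replicate k [i, j])) \<subseteq> {i, j}"
  by (induction k) auto

lemma rev_concat_replicate_pair: "rev (concat (replicate k [i, j])) = concat (replicate k [j, i])"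
proof (induction k)
  case (Suc k)
  have "concat (replicate k [j, i]) @ [j, i] = [j, i] @ concat (replicate k [j, i])"
    by (induction k) auto
  then show ?case using Suc by simp
qed simp

lemma cox_relator_subset: "cox_relator n M r \<Longrightarrow> set r \<subseteq> {..<n}"
  by (induction rule: cox_relator.induct) (use set_concat_replicate_pair in fastforce)+

lemma cox_relator_even_length: "cox_relator n M r \<Longrightarrow> even (length r)"
proof (induction rule: cox_relator.induct)
  case (braid i j k)
  have "length (concat (replicate k [i, j])) = 2 * k"
    by (induction k) auto
  then show ?case by simp
qed simp

lemma cox_relator_rev: "cox_relator n M r \<Longrightarrow> cox_relator n M (rev r)"
proof (induction rule: cox_relator.induct)
  case (sq i)
  then show ?case by (simp add: cox_relator.sq)
next
  case (braid i j k)
  then show ?case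
    unfolding rev_concat_replicate_pair by (intro cox_relator.braid) (auto simp: mult.commute)
qed

lemma cox_eq_subset_iff: "cox_eq n M u v \<Longrightarrow> set u \<subseteq> {..<n} \<longleftrightarrow> set v \<subseteq> {..<n}"
  by (induction rule: cox_eq.induct) (use cox_relator_subset in auto)

lemma cox_eq_even_length_iff: "cox_eq n M u v \<Longrightarrow> even (length u) \<longleftrightarrow> even (length v)"
  by (induction rule: cox_eq.induct) (use cox_relator_even_length in auto)

lemma cox_eq_rev: "cox_eq n M u v \<Longrightarrow> cox_eq n M (rev u) (rev v)"
proof (induction rule: cox_eq.induct)
  case (del r a b)
  show ?case using cox_eq.del[OF cox_relator_rev[OF del], of "rev b" "rev a"] by simp
qed (auto intro: cox_eq.intros)

lemma cox_len_le: "cox_eq n M u v \<Longrightarrow> cox_len n M u \<le> length v"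
  unfolding cox_len_def by (rule Least_le) auto

lemma cox_len_le_length: "cox_len n M u \<le> length u"
  by (rule cox_len_le) (rule cox_eq.refl)

lemma obtain_reduced_form:
  obtains v where "cox_eq n M u v" "length v = cox_len n M u"
proof -
  have "\<exists>v. length v = length u \<and> cox_eq n M u v"
    using cox_eq.refl by blast
  then have "\<exists>v. length v = cox_len n M u \<and> cox_eq n M u v"
    unfolding cox_len_def by (rule LeastI)
  then show ?thesis using that by blast
qed

lemma cox_len_cong: "cox_eq n M u v \<Longrightarrow> cox_len n M u = cox_len n M v"
  unfolding cox_len_def by (metis cox_eq.sym cox_eq.trans)

lemma cox_len_rev: "cox_len n M (rev u) = cox_len n M u"
proof -
  have le: "cox_len n M (rev u) \<le> cox_len n M u" for u
  proof -
    obtain v where "cox_eq n M u v" "length v = cox_len n M u"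
      by (rule obtain_reduced_form)
    then show ?thesis using cox_len_le[OF cox_eq_rev] by fastforce
  qed
  show ?thesis using le[of u] le[of "rev u"] by simp
qed

lemma cox_len_append_le: "cox_len n M (u @ v) \<le> cox_len n M u + cox_len n M v"
proof -
  obtain u' where "cox_eq n M u u'" "length u' = cox_len n M u"
    by (rule obtain_reduced_form)
  moreover obtain v' where "cox_eq n M v v'" "length v' = cox_len n M v"
    by (rule obtain_reduced_form)
  ultimately show ?thesis using cox_len_le[OF cox_eq_append] by fastforce
qed

lemma cox_len_append_le_length: "cox_len n M (u @ v) \<le> length u + cox_len n M v"
  using cox_len_append_le[of n M u v] cox_len_le_length[of n M u] by simp

lemma cox_len_snoc:
  assumes "i < n"
  shows "cox_len n M (u @ [i]) = cox_len n M u + 1 \<or> cox_len n M u = cox_len n M (u @ [i]) + 1"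
proof -
  have up: "cox_len n M (v @ [i]) \<le> cox_len n M v + 1" for v
    using cox_len_append_le[of n M v "[i]"] cox_len_le_length[of n M "[i]"] by simp
  have "cox_eq n M (u @ [i, i] @ []) (u @ [])"
    using assms by (rule cox_eq_cancel_square)
  then have "cox_len n M ((u @ [i]) @ [i]) = cox_len n M u"
    by (simp add: cox_len_cong)
  then have down: "cox_len n M u \<le> cox_len n M (u @ [i]) + 1"
    using up[of "u @ [i]"] by simp
  obtain v where v: "cox_eq n M u v" "length v = cox_len n M u"
    by (rule obtain_reduced_form)
  obtain v' where v': "cox_eq n M (u @ [i]) v'" "length v' = cox_len n M (u @ [i])"
    by (rule obtain_reduced_form)
  have "cox_len n M (u @ [i]) \<noteq> cox_len n M u"
    using cox_eq_even_length_iff[OF v(1)] cox_eq_even_length_iff[OF v'(1)] v(2) v'(2) by auto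
  then show ?thesis using up[of u] down by linarith
qed

lemma cox_len_snoc_descent:
  "i < n \<Longrightarrow> \<not> cox_len n M u < cox_len n M (u @ [i]) \<Longrightarrow> cox_len n M u = cox_len n M (u @ [i]) + 1"
  using cox_len_snoc[of i n M u] by linarith

lemma obtain_reduced_snoc:
  assumes "set w \<subseteq> {..<n}" "cox_len n M w \<noteq> 0"
  obtains w' j where "cox_eq n M w (w' @ [j])" "cox_len n M w' + 1 = cox_len n M w"
    "set w' \<subseteq> {..<n}" "j < n"
proof -
  obtain v where v: "cox_eq n M w v" "length v = cox_len n M w"
    by (rule obtain_reduced_form)
  then obtain w' j where w': "v = w' @ [j]"
    using assms(2) by (metis length_0_conv rev_exhaust)
  have "set v \<subseteq> {..<n}"
    using cox_eq_subset_iff[OF v(1)] assms(1) by simp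
  then have "set w' \<subseteq> {..<n}" "j < n"
    using w' by auto
  moreover have "cox_len n M w' + 1 = cox_len n M w"
    using cox_len_le_length[of n M w'] cox_len_snoc[OF \<open>j < n\<close>, of M w']
      cox_len_cong[OF v(1)] v(2) w'
    by auto
  ultimately show ?thesis using that v(1) w' by blast
qed

lemma cox_len_snoc_right_factor:
  assumes "cox_eq n M (v @ y) w" "cox_len n M v + length y = cox_len n M w"
    and "cox_len n M (w @ [i]) = cox_len n M w + 1"
  shows "cox_len n M (y @ [i]) = length y + 1"
proof -
  have "cox_eq n M (v @ y @ [i]) (w @ [i])"
    using cox_eq_append_cong[OF assms(1), of "[]" "[i]"] by simp
  then have "cox_len n M w + 1 \<le> cox_len n M v + cox_len n M (y @ [i])"
    using cox_len_append_le[of n M v "y @ [i]"] cox_len_cong assms(3) by metis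
  then show ?thesis
    using assms(2) cox_len_le_length[of n M "y @ [i]"] by simp
qed

(* Existence of the factorisation w = v y with v in W^S and y in W_S. *)
lemma exists_ascending_factorization:
  assumes S: "S \<subseteq> {..<n}" and v0: "set v0 \<subseteq> {..<n}" "set y0 \<subseteq> S"
    "cox_eq n M (v0 @ y0) w" "cox_len n M v0 + length y0 = cox_len n M w"
  obtains v y where "set v \<subseteq> {..<n}" "set y \<subseteq> S" "cox_eq n M (v @ y) w"
    "cox_len n M v + length y = cox_len n M w" "cox_len n M v \<le> cox_len n M v0"
    "\<And>x. x \<in> S \<Longrightarrow> cox_len n M v < cox_len n M (v @ [x])"
proof -
  have "\<exists>v y. set v \<subseteq> {..<n} \<and> set y \<subseteq> S \<and> cox_eq n M (v @ y) w \<and>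
      cox_len n M v + length y = cox_len n M w \<and> cox_len n M v \<le> cox_len n M v0 \<and>
      (\<forall>x\<in>S. cox_len n M v < cox_len n M (v @ [x]))"
    using v0
  proof (induction "cox_len n M v0" arbitrary: v0 y0 rule: less_induct)
    case less
    show ?case
    proof (cases "\<forall>x\<in>S. cox_len n M v0 < cox_len n M (v0 @ [x])")
      case True
      then show ?thesis using less.prems by blast
    next
      case False
      then obtain x where x: "x \<in> S" "x < n" and
        descent: "cox_len n M v0 = cox_len n M (v0 @ [x]) + 1"
        using S cox_len_snoc_descent by blast
      obtain v1 where v1: "cox_eq n M (v0 @ [x]) v1" "length v1 = cox_len n M (v0 @ [x])"
        by (rule obtain_reduced_form)
      have "cox_eq n M (v1 @ x # y0) (v0 @ [x, x] @ y0)"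
        using cox_eq_append_cong[OF cox_eq.sym[OF v1(1)], of "[]" "[x] @ y0"] by simp
      also have "cox_eq n M \<dots> (v0 @ y0)"
        using x(2) by (rule cox_eq_cancel_square)
      finally have "cox_eq n M (v1 @ x # y0) w"
        using less.prems(3) by (rule cox_eq.trans)
      moreover have len_v1: "cox_len n M v1 = cox_len n M (v0 @ [x])"
        using v1 cox_len_cong by metis
      moreover have "set v1 \<subseteq> {..<n}"
        using cox_eq_subset_iff[OF v1(1)] less.prems(1) x by simp
      moreover have "cox_len n M v1 < cox_len n M v0"
        using descent len_v1 by simp
      ultimately obtain v y where "set v \<subseteq> {..<n}" "set y \<subseteq> S" "cox_eq n M (v @ y) w"
        "cox_len n M v + length y = cox_len n M w" "cox_len n M v \<le> cox_len n M v1"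
        "\<forall>x\<in>S. cox_len n M v < cox_len n M (v @ [x])"
        using less.hyps[of v1 "x # y0"] less.prems x descent by auto
      then show ?thesis
        using \<open>cox_len n M v1 < cox_len n M v0\<close> by (meson less_imp_le order.trans)
    qed
  qed
  then show ?thesis using that by blast
qed

lemma reduced_append_right: "reduced n M (u @ v) \<Longrightarrow> reduced n M v"
  using cox_len_append_le_length[of n M u v] cox_len_le_length[of n M v]
  by (auto simp: reduced_def)

lemma in_min_coset_append_right:
  assumes red: "reduced n M (u @ v)" and min: "in_min_coset n M J (u @ v)" and J: "J \<subseteq> {..<n}"
  shows "in_min_coset n M J v"
  unfolding in_min_coset_def
proof
  fix j assume j: "j \<in> J"
  show "cox_len n M v < cox_len n M (v @ [j])"
  proof (rule ccontr)
    assume "\<not> ?thesis"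
    then have "cox_len n M v = cox_len n M (v @ [j]) + 1"
      using cox_len_snoc_descent j J by blast
    then have "cox_len n M (u @ v @ [j]) < cox_len n M (u @ v)"
      using cox_len_append_le_length[of n M u "v @ [j]"] cox_len_le_length[of n M v] red
      by (auto simp: reduced_def)
    then show False
      using min j unfolding in_min_coset_def by (metis append_assoc less_asym)
  qed
qed

lemma right_descent_neq_right_ascent:
  assumes "cox_eq n M w (w' @ [j])" "cox_len n M w' + 1 = cox_len n M w"
    and "cox_len n M w < cox_len n M (w @ [i])" "i < n"
  shows "j \<noteq> i"
proof
  assume "j = i"
  have "cox_eq n M (w @ [i]) ([] @ (w' @ [j]) @ [i])"
    using cox_eq_append_cong[OF assms(1), of "[]" "[i]"] by simp
  also have "\<dots> = w' @ [i, i] @ []"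
    using \<open>j = i\<close> by simp
  also have "cox_eq n M \<dots> (w' @ [])"
    using assms(4) by (rule cox_eq_cancel_square)
  finally have "cox_len n M (w @ [i]) = cox_len n M w'"
    by (simp add: cox_len_cong)
  then show False using assms(2,3) by simp
qed

definition alt_word :: "nat \<Rightarrow> nat \<Rightarrow> nat \<Rightarrow> nat list" where
  "alt_word a b L = map (\<lambda>t. if even t then a else b) [0..<L]"

lemma length_alt_word [simp]: "length (alt_word a b L) = L"
  by (simp add: alt_word_def)

lemma nth_alt_word [simp]: "t < L \<Longrightarrow> alt_word a b L ! t = (if even t then a else b)"
  by (simp add: alt_word_def)

lemma alt_word_0 [simp]: "alt_word a b 0 = []"
  by (simp add: alt_word_def)

lemma alt_word_Suc: "alt_word a b (Suc L) = alt_word a b L @ [if even L then a else b]"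
  by (simp add: alt_word_def)

lemma alt_word_Suc_Cons: "alt_word a b (Suc L) = a # alt_word b a L"
  by (rule nth_equalityI) (auto simp: nth_Cons split: nat.splits)

lemma take_alt_word: "L \<le> K \<Longrightarrow> take L (alt_word a b K) = alt_word a b L"
  by (simp add: alt_word_def take_map)

lemma set_alt_word: "set (alt_word a b L) \<subseteq> {a, b}"
  by (auto simp: alt_word_def)

lemma concat_replicate_pair_eq_alt_word: "concat (replicate m [a, b]) = alt_word a b (2 * m)"
proof (induction m)
  case (Suc m)
  have "concat (replicate (Suc m) [a, b]) = concat (replicate m [a, b]) @ [a, b]"
    by (induction m) auto
  then show ?case using Suc by (simp add: alt_word_Suc)
qed simp

lemma alt_word_append_rev: "alt_word a b m @ rev (alt_word b a m) = alt_word a b (2 * m)"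
proof (rule nth_equalityI)
  fix t assume "t < length (alt_word a b m @ rev (alt_word b a m))"
  then have t: "t < 2 * m" by simp
  show "(alt_word a b m @ rev (alt_word b a m)) ! t = alt_word a b (2 * m) ! t"
  proof (cases "t < m")
    case False
    then have "(alt_word a b m @ rev (alt_word b a m)) ! t = alt_word b a m ! (m - Suc (t - m))"
      using t by (simp add: nth_append rev_nth)
    moreover have "even (m - Suc (t - m)) \<longleftrightarrow> odd t"
      using False t by presburger
    ultimately show ?thesis using t False by simp
  qed (use t in \<open>simp add: nth_append\<close>)
qed simp

lemma eq_alt_word_if_no_adjacent_repeats:
  assumes "a \<noteq> b" "set z \<subseteq> {a, b}" "z \<noteq> []" "hd z = a"
    and "\<And>t. Suc t < length z \<Longrightarrow> z ! t \<noteq> z ! Suc t"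
  shows "z = alt_word a b (length z)"
proof (rule nth_equalityI)
  fix t assume "t < length z"
  then show "z ! t = alt_word a b (length z) ! t"
  proof (induction t)
    case 0
    then show ?case using assms(3,4) by (simp add: hd_conv_nth)
  next
    case (Suc t)
    have "z ! t \<in> {a, b}" "z ! Suc t \<in> {a, b}"
      using assms(2) Suc.prems by (meson Suc_lessD nth_mem subsetD)+
    then show ?case using Suc assms(1) assms(5)[of t] by (auto split: if_splits)
  qed
qed simp

lemma cox_eq_rev_append_cancel: "set u \<subseteq> {..<n} \<Longrightarrow> cox_eq n M (p @ rev u @ u @ s) (p @ s)"
proof (induction u arbitrary: p s)
  case (Cons x u)
  have "cox_eq n M ((p @ rev u) @ [x, x] @ (u @ s)) ((p @ rev u) @ (u @ s))"
    using Cons.prems by (intro cox_eq_cancel_square) auto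
  also have "cox_eq n M \<dots> (p @ s)"
    using Cons by simp
  finally show ?case by simp
qed (simp add: cox_eq.refl)

lemma cox_eq_alt_word_braid:
  assumes r: "cox_relator n M (concat (replicate m [a, b]))" and "a < n" "b < n"
  shows "cox_eq n M (alt_word a b m) (alt_word b a m)"
proof -
  have "set (alt_word b a m) \<subseteq> {..<n}"
    using set_alt_word assms(2,3) by blast
  then have "cox_eq n M (alt_word a b m @ rev (alt_word b a m) @ alt_word b a m @ [])
      (alt_word a b m @ [])"
    by (rule cox_eq_rev_append_cancel)
  then have "cox_eq n M (alt_word a b m) ([] @ concat (replicate m [a, b]) @ alt_word b a m)"
    by (simp only: append_Nil append_Nil2 append_assoc[symmetric] alt_word_append_rev
        concat_replicate_pair_eq_alt_word cox_eq.sym)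
  also have "cox_eq n M \<dots> ([] @ alt_word b a m)"
    by (rule cox_eq.del[OF r])
  finally show ?thesis by simp
qed

lemma reduced_alt_word_length_le:
  assumes r: "cox_relator n M (concat (replicate m [a, b]))" and ab: "a < n" "b < n"
    and m: "m \<ge> 1" and red: "cox_len n M (alt_word a b K) = K"
  shows "K \<le> m"
proof (rule ccontr)
  assume "\<not> K \<le> m"
  then have K: "Suc m \<le> K" by simp
  have "alt_word a b K = alt_word a b (Suc m) @ drop (Suc m) (alt_word a b K)"
    using take_alt_word[OF K] append_take_drop_id by metis
  then have "K \<le> cox_len n M (alt_word a b (Suc m)) + (K - Suc m)"
    using cox_len_append_le[of n M "alt_word a b (Suc m)" "drop (Suc m) (alt_word a b K)"]
      cox_len_le_length[of n M "drop (Suc m) (alt_word a b K)"] red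
    by simp
  then have long: "Suc m \<le> cox_len n M (alt_word a b (Suc m))"
    using K by simp
  define c where "c = (if even m then a else b)"
  obtain m' where m': "m = Suc m'"
    using m by (cases m) auto
  have "cox_eq n M (alt_word a b (Suc m)) ([] @ alt_word a b m @ [c])"
    by (simp add: alt_word_Suc c_def cox_eq.refl)
  also have "cox_eq n M \<dots> ([] @ alt_word b a m @ [c])"
    by (rule cox_eq_append_cong[OF cox_eq_alt_word_braid[OF r ab]])
  also have "\<dots> = alt_word b a m' @ [c, c] @ []"
    by (simp add: alt_word_Suc c_def m')
  also have "cox_eq n M \<dots> (alt_word b a m' @ [])"
    using ab by (intro cox_eq_cancel_square) (auto simp: c_def)
  finally have "cox_len n M (alt_word a b (Suc m)) \<le> m'"
    using cox_len_le by fastforce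
  then show False using long m' by simp
qed

lemma reduced_nth_neq_nth_Suc:
  assumes red: "cox_len n M z = length z" and z: "set z \<subseteq> {..<n}" and t: "Suc t < length z"
  shows "z ! t \<noteq> z ! Suc t"
proof
  assume eq: "z ! t = z ! Suc t"
  have "z = take t z @ [z ! t, z ! Suc t] @ drop (Suc (Suc t)) z"
    using t by (metis Cons_nth_drop_Suc Suc_lessD append_Cons append_Nil append_take_drop_id)
  also have "\<dots> = take t z @ [z ! t, z ! t] @ drop (Suc (Suc t)) z"
    using eq by simp
  also have "cox_eq n M \<dots> (take t z @ drop (Suc (Suc t)) z)"
    using z t by (intro cox_eq_cancel_square) (meson Suc_lessD lessThan_iff nth_mem subsetD)
  finally have "cox_len n M z \<le> length z - 2"
    using cox_len_le t by fastforce
  then show False using red t by simp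
qed

section \<open>The geometric representation and the numbers game\<close>

definition simple_root :: "nat \<Rightarrow> nat \<Rightarrow> real" where
  "simple_root k = (\<lambda>l. if l = k then 1 else 0)"

(* A vector b :: nat \<Rightarrow> real stands for \<Sum>l. b l * \<alpha>_l, and reflect n M a is s_a acting on
   it in the geometric representation: s_a \<alpha>_l = \<alpha>_l - M a l * \<alpha>_a. *)
definition reflect :: "nat \<Rightarrow> (nat \<Rightarrow> nat \<Rightarrow> real) \<Rightarrow> nat \<Rightarrow> (nat \<Rightarrow> real) \<Rightarrow> nat \<Rightarrow> real" where
  "reflect n M a b = b(a := b a - (\<Sum>l<n. M a l * b l))"

fun word_act :: "nat \<Rightarrow> (nat \<Rightarrow> nat \<Rightarrow> real) \<Rightarrow> nat list \<Rightarrow> (nat \<Rightarrow> real) \<Rightarrow> nat \<Rightarrow> real" where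
  "word_act n M [] b = b"
| "word_act n M (a # w) b = reflect n M a (word_act n M w b)"

lemma sum_mult_fun_upd:
  fixes f b :: "nat \<Rightarrow> real"
  assumes "i < n"
  shows "(\<Sum>l<n. f l * (b(i := x)) l) = (\<Sum>l<n. f l * b l) + f i * (x - b i)"
proof -
  have "(\<Sum>l<n. f l * (b(i := x)) l) = (\<Sum>l<n. f l * b l + (if l = i then f i * (x - b i) else 0))"
    by (rule sum.cong) (auto simp: right_diff_distrib)
  also have "\<dots> = (\<Sum>l<n. f l * b l) + f i * (x - b i)"
    using assms by (simp add: sum.distrib)
  finally show ?thesis .
qed

lemma sum_mult_simple_root: "k < n \<Longrightarrow> (\<Sum>l<n. f l * simple_root k l) = f k"
  by (simp add: simple_root_def if_distrib cong: if_cong)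

lemma sum_lessThan_split_pair:
  fixes n :: nat
  assumes "i < n" "j < n" "i \<noteq> j"
  shows "(\<Sum>l<n. f l) = f i + f j + (\<Sum>l\<in>{..<n} - {i, j}. f l)"
proof -
  have "(\<Sum>l<n. f l) = f i + (\<Sum>l\<in>{..<n} - {i}. f l)"
    using assms by (simp add: sum.remove)
  also have "(\<Sum>l\<in>{..<n} - {i}. f l) = f j + (\<Sum>l\<in>{..<n} - {i} - {j}. f l)"
    using assms by (intro sum.remove) auto
  also have "{..<n} - {i} - {j} = {..<n} - {i, j}"
    by auto
  finally show ?thesis by (simp add: add.assoc)
qed

lemma word_act_append: "word_act n M (u @ v) b = word_act n M u (word_act n M v b)"
  by (induction u) auto

lemma reflect_linear:
  "reflect n M a (\<lambda>k. x * b k + y * c k) = (\<lambda>k. x * reflect n M a b k + y * reflect n M a c k)"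
proof -
  have "(\<Sum>l<n. M a l * (x * b l + y * c l)) = x * (\<Sum>l<n. M a l * b l) + y * (\<Sum>l<n. M a l * c l)"
    by (simp add: sum_distrib_left sum.distrib algebra_simps)
  then show ?thesis unfolding reflect_def by (auto simp: algebra_simps)
qed

lemma word_act_linear:
  "word_act n M u (\<lambda>k. x * b k + y * c k) = (\<lambda>k. x * word_act n M u b k + y * word_act n M u c k)"
  by (induction u) (auto simp: reflect_linear)

lemma word_act_sum:
  "finite S \<Longrightarrow> word_act n M u (\<lambda>k. \<Sum>l\<in>S. c l * simple_root l k) =
    (\<lambda>k. \<Sum>l\<in>S. c l * word_act n M u (simple_root l) k)"
proof (induction S rule: finite_induct)
  case empty
  show ?case using word_act_linear[of n M u 0 "\<lambda>k. 0" 0 "\<lambda>k. 0"] by simp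
next
  case (insert x F)
  then show ?case
    using word_act_linear[of n M u "c x" "simple_root x" 1 "\<lambda>k. \<Sum>l\<in>F. c l * simple_root l k"]
    by simp
qed

lemma word_act_expand:
  assumes "\<forall>l\<ge>n. b l = 0"
  shows "word_act n M u b k = (\<Sum>l<n. b l * word_act n M u (simple_root l) k)"
proof -
  have "b = (\<lambda>k. \<Sum>l<n. b l * simple_root l k)"
  proof
    fix k
    show "b k = (\<Sum>l<n. b l * simple_root l k)"
      using assms by (cases "k < n") (auto simp: simple_root_def if_distrib cong: if_cong)
  qed
  then show ?thesis using word_act_sum[of "{..<n}" n M u b] by (metis finite_lessThan)
qed

lemma word_act_vanishes:
  "set u \<subseteq> {..<n} \<Longrightarrow> \<forall>l\<ge>n. b l = 0 \<Longrightarrow> n \<le> l \<Longrightarrow> word_act n M u b l = 0"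
  by (induction u) (auto simp: reflect_def)

lemma fire_pairing:
  assumes "x < n"
  shows "(\<Sum>l<n. fire M lam x l * b l) = (\<Sum>l<n. lam l * reflect n M x b l)"
proof -
  have "(\<Sum>l<n. fire M lam x l * b l) = (\<Sum>l<n. lam l * b l) - lam x * (\<Sum>l<n. M x l * b l)"
    by (simp add: fire_def algebra_simps sum_subtractf sum_distrib_left)
  also have "\<dots> = (\<Sum>l<n. lam l * reflect n M x b l)"
    unfolding reflect_def using sum_mult_fun_upd[OF assms, of lam b] by simp
  finally show ?thesis .
qed

lemma foldl_fire_eq_pairing:
  "set xs \<subseteq> {..<n} \<Longrightarrow> k < n \<Longrightarrow>
    foldl (fire M) lam xs k = (\<Sum>l<n. lam l * word_act n M xs (simple_root k) l)"
proof (induction xs arbitrary: lam)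
  case Nil
  then show ?case by (simp add: sum_mult_simple_root)
next
  case (Cons x xs)
  then show ?case using fire_pairing[of x n M lam] by simp
qed

lemma legal_if_prefixes_positive:
  "(\<And>xs i ys. zs = xs @ i # ys \<Longrightarrow> 0 < foldl (fire M) lam xs i) \<Longrightarrow> legal M lam zs"
proof (induction zs arbitrary: lam)
  case (Cons z zs)
  have "0 < lam z"
    using Cons.prems[of "[]"] by simp
  moreover have "legal M (fire M lam z) zs"
    using Cons.IH Cons.prems[of "z # _"] by simp
  ultimately show ?case by simp
qed simp

lemma legal_take: "legal M lam zs \<Longrightarrow> legal M lam (take q zs)"
  by (induction zs arbitrary: lam q) (auto simp: take_Cons split: nat.split)

section \<open>Rank-two computations\<close>

(* Chebyshev polynomials of the second kind with shifted index: cheb t m = U_(m-1) (t / 2). *)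
fun cheb :: "real \<Rightarrow> nat \<Rightarrow> real" where
  "cheb t 0 = 0"
| "cheb t (Suc 0) = 1"
| "cheb t (Suc (Suc m)) = t * cheb t (Suc m) - cheb t m"

lemma cheb_two_cos: "sin f \<noteq> 0 \<Longrightarrow> cheb (2 * cos f) m = sin (real m * f) / sin f"
proof (induction "2 * cos f" m rule: cheb.induct)
  case (3 m)
  have "sin (real (Suc (Suc m)) * f) = sin (real (Suc m) * f + f)"
    by (simp add: algebra_simps)
  also have "\<dots> = 2 * cos f * sin (real (Suc m) * f) - sin (real (Suc m) * f - f)"
    unfolding sin_add sin_diff by (simp add: algebra_simps)
  also have "real (Suc m) * f - f = real m * f"
    by (simp add: algebra_simps)
  finally show ?case using 3 by (simp add: field_simps)
qed simp_all

lemma cheb_nonneg_mono: "2 \<le> c \<Longrightarrow> 0 \<le> cheb c l \<and> cheb c l \<le> cheb c (Suc l)"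
proof (induction l)
  case (Suc l)
  have "cheb c (Suc (Suc l)) - cheb c (Suc l) =
      (c - 2) * cheb c (Suc l) + (cheb c (Suc l) - cheb c l)"
    by (simp add: algebra_simps)
  moreover have "0 \<le> (c - 2) * cheb c (Suc l)"
    using Suc by simp
  ultimately show ?case using Suc by linarith
qed simp

lemma cheb_two_cos_pi_div_nonneg:
  assumes "2 \<le> m" "l \<le> m"
  shows "0 \<le> cheb (2 * cos (pi / real m)) l"
proof -
  have "0 < sin (pi / real m)"
    using assms by (intro sin_gt_zero) (auto simp: field_simps)
  moreover have "0 \<le> sin (real l * (pi / real m))"
    using assms by (intro sin_ge_zero) (auto simp: field_simps)
  ultimately show ?thesis using cheb_two_cos[of "pi / real m" l] by simp
qed

definition rot_lin :: "real \<Rightarrow> real \<Rightarrow> real \<times> real \<Rightarrow> real \<times> real" where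
  "rot_lin P Q d = ((P * Q - 1) * fst d + P * snd d, - Q * fst d - snd d)"

(* On the coordinates (b i, b j) the product s_i s_j acts as rot_aff (M i j) (M j i) p q, where
   p and q collect the contributions of the other coordinates; rot_lin is its linear part. *)
definition rot_aff :: "real \<Rightarrow> real \<Rightarrow> real \<Rightarrow> real \<Rightarrow> real \<times> real \<Rightarrow> real \<times> real" where
  "rot_aff P Q p q x = (let y = - snd x - Q * fst x - q in (- fst x - P * y - p, y))"

(* Cayley-Hamilton: rot_lin P Q squared is (P * Q - 2) rot_lin P Q - id. *)
lemma rot_lin_funpow_Suc:
  "(rot_lin P Q ^^ Suc m) d =
    (cheb (P * Q - 2) (Suc m) * fst (rot_lin P Q d) - cheb (P * Q - 2) m * fst d,
     cheb (P * Q - 2) (Suc m) * snd (rot_lin P Q d) - cheb (P * Q - 2) m * snd d)"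
proof (induction m)
  case (Suc m)
  have "(rot_lin P Q ^^ Suc (Suc m)) d = rot_lin P Q ((rot_lin P Q ^^ Suc m) d)"
    by (simp only: funpow.simps comp_apply)
  also have "\<dots> = rot_lin P Q
      (cheb (P * Q - 2) (Suc m) * fst (rot_lin P Q d) - cheb (P * Q - 2) m * fst d,
       cheb (P * Q - 2) (Suc m) * snd (rot_lin P Q d) - cheb (P * Q - 2) m * snd d)"
    by (simp only: Suc)
  also have "\<dots> =
      (cheb (P * Q - 2) (Suc (Suc m)) * fst (rot_lin P Q d) - cheb (P * Q - 2) (Suc m) * fst d,
       cheb (P * Q - 2) (Suc (Suc m)) * snd (rot_lin P Q d) - cheb (P * Q - 2) (Suc m) * snd d)"
    by (simp add: rot_lin_def algebra_simps)
  finally show ?case .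
qed simp

lemma rot_lin_funpow_order:
  assumes k: "3 \<le> k" and PQ: "P * Q = 4 * (cos (pi / real k))\<^sup>2"
  shows "(rot_lin P Q ^^ k) d = d"
proof -
  define f where "f = 2 * pi / real k"
  have sin_f: "0 < sin f"
    using k by (intro sin_gt_zero) (auto simp: f_def field_simps)
  have t: "P * Q - 2 = 2 * cos f"
    unfolding PQ f_def using cos_double_cos[of "pi / real k"] by (simp add: algebra_simps)
  obtain m where m: "k = Suc m"
    using k by (cases k) auto
  have "real (Suc m) * f = 2 * pi"
    using m k by (simp add: f_def)
  then have "cheb (P * Q - 2) (Suc m) = 0"
    unfolding t using cheb_two_cos[of f "Suc m"] sin_f by simp
  moreover have "real m * f = 2 * pi - f"
    using m k by (simp add: f_def field_simps)
  then have "cheb (P * Q - 2) m = -1"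
    unfolding t using cheb_two_cos[of f m] sin_f by simp
  ultimately show ?thesis
    using rot_lin_funpow_Suc[where P = P and Q = Q and m = m and d = d] m by simp
qed

lemma funpow_conj:
  assumes "\<And>x. F x = T (G (T' x))" and "\<And>x. T' (T x) = x" and "\<And>x. T (T' x) = x"
  shows "(F ^^ m) x = T ((G ^^ m) (T' x))"
proof (induction m)
  case 0
  show ?case using assms(3) by simp
next
  case (Suc m)
  then show ?case using assms(1,2) by simp
qed

(* (a, b) is the fixed point of rot_aff, which exists since det (id - rot_lin P Q) = 4 - P * Q. *)
lemma rot_aff_conj_rot_lin:
  assumes "P * Q \<noteq> 4"
  obtains a b where "\<And>x. rot_aff P Q p q x =
    (fst (rot_lin P Q (fst x - a, snd x - b)) + a, snd (rot_lin P Q (fst x - a, snd x - b)) + b)"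
proof -
  define e where "e = inverse (4 - P * Q)"
  have e: "e * (4 - P * Q) = 1"
    unfolding e_def using assms by simp
  define a where "a = (P * q - 2 * p) * e"
  define b where "b = (Q * p - 2 * q) * e"
  have "2 * a + P * b = e * (4 - P * Q) * (- p)"
    unfolding a_def b_def by (simp add: algebra_simps)
  then have fix_a: "2 * a + P * b = - p"
    using e by simp
  have "2 * b + Q * a = e * (4 - P * Q) * (- q)"
    unfolding a_def b_def by (simp add: algebra_simps)
  then have fix_b: "2 * b + Q * a = - q"
    using e by simp
  have "rot_aff P Q p q (x1, x2) =
      (fst (rot_lin P Q (x1 - a, x2 - b)) + a, snd (rot_lin P Q (x1 - a, x2 - b)) + b)" for x1 x2
  proof -
    have "P * (2 * b + Q * a) = P * (- q)"
      using fix_b by simp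
    then have first:
      "- x1 - P * (- x2 - Q * x1 - q) - p = (P * Q - 1) * (x1 - a) + P * (x2 - b) + a"
      using fix_a by (simp add: algebra_simps)
    have second: "- x2 - Q * x1 - q = - Q * (x1 - a) - (x2 - b) + b"
      using fix_b by (simp add: algebra_simps)
    show ?thesis
      unfolding rot_aff_def rot_lin_def Let_def fst_conv snd_conv prod.inject
      using first second by blast
  qed
  then show ?thesis using that by (metis prod.collapse)
qed

lemma rot_aff_funpow_order:
  assumes k: "3 \<le> k" and PQ: "P * Q = 4 * (cos (pi / real k))\<^sup>2"
  shows "(rot_aff P Q p q ^^ k) x = x"
proof -
  have "0 < sin (pi / real k)"
    using k by (intro sin_gt_zero) (auto simp: field_simps)
  then have "0 < (sin (pi / real k))\<^sup>2"
    by simp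
  then have "(cos (pi / real k))\<^sup>2 < 1"
    using sin_cos_squared_add[of "pi / real k"] by linarith
  then have "P * Q \<noteq> 4"
    using PQ by simp
  then obtain a b where conj: "\<And>x. rot_aff P Q p q x =
    (fst (rot_lin P Q (fst x - a, snd x - b)) + a, snd (rot_lin P Q (fst x - a, snd x - b)) + b)"
    by (rule rot_aff_conj_rot_lin[where p = p and q = q]) blast
  have "(rot_aff P Q p q ^^ k) x =
      (\<lambda>d. (fst d + a, snd d + b)) ((rot_lin P Q ^^ k) (fst x - a, snd x - b))"
    by (rule funpow_conj[where T' = "\<lambda>d. (fst d - a, snd d - b)"]) (simp_all add: conj)
  then show ?thesis using rot_lin_funpow_order[OF assms] by simp
qed

fun dihedral_coeffs :: "real \<Rightarrow> real \<Rightarrow> nat \<Rightarrow> real \<times> real" where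
  "dihedral_coeffs P Q 0 = (1, 0)"
| "dihedral_coeffs P Q (Suc L) =
    (if even L
     then (fst (dihedral_coeffs P Q L),
           - snd (dihedral_coeffs P Q L) - Q * fst (dihedral_coeffs P Q L))
     else (- fst (dihedral_coeffs P Q L) - P * snd (dihedral_coeffs P Q L),
           snd (dihedral_coeffs P Q L)))"

lemma dihedral_coeffs_cheb:
  assumes sc: "s * c = - Q" and Ps: "P * s = - c"
  shows "dihedral_coeffs P Q L =
    (if even L then (cheb c (Suc L), s * cheb c L) else (cheb c L, s * cheb c (Suc L)))"
proof (induction L)
  case (Suc L)
  have "- (s * x) - Q * y = s * (c * y - x)" for x y
    using sc by (simp add: algebra_simps flip: mult.assoc)
  moreover have "- x - P * (s * y) = c * y - x" for x y
    using Ps by (simp flip: mult.assoc)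
  ultimately show ?case using Suc by (cases "even L") simp_all
qed simp

lemma dihedral_coeffs_nonneg:
  assumes PQ: "P \<le> 0" "Q \<le> 0"
    and order: "4 \<le> P * Q \<or> (\<exists>m\<ge>2. P * Q = 4 * (cos (pi / real m))\<^sup>2 \<and> L < m)"
  shows "0 \<le> fst (dihedral_coeffs P Q L) \<and> 0 \<le> snd (dihedral_coeffs P Q L)"
proof -
  have from_cheb: ?thesis
    if c: "0 < c" "c * c = P * Q" and nonneg: "\<And>l. l \<le> Suc L \<Longrightarrow> 0 \<le> cheb c l" for c
  proof -
    define s where "s = - Q / c"
    have "s * c = - Q" "P * s = - c"
      using c by (simp_all add: s_def field_simps)
    moreover have "0 \<le> s"
      using c PQ by (simp add: s_def divide_nonpos_pos)
    ultimately show ?thesis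
      using dihedral_coeffs_cheb[of s c Q P L] nonneg[of L] nonneg[of "Suc L"] by simp
  qed
  from order show ?thesis
  proof
    assume four: "4 \<le> P * Q"
    then have "2 \<le> sqrt (P * Q)"
      by (metis real_sqrt_four real_sqrt_le_iff)
    then show ?thesis
      using four by (intro from_cheb[of "sqrt (P * Q)"]) (auto simp: cheb_nonneg_mono)
  next
    assume "\<exists>m\<ge>2. P * Q = 4 * (cos (pi / real m))\<^sup>2 \<and> L < m"
    then obtain m where m: "2 \<le> m" "P * Q = 4 * (cos (pi / real m))\<^sup>2" "L < m"
      by blast
    show ?thesis
    proof (cases "m = 2")
      case True
      then have "L = 0 \<or> L = 1"
        using m(3) by auto
      then show ?thesis using PQ by auto
    next
      case False
      have "0 < cos (pi / real m)"
        using m(1) False by (intro cos_gt_zero) (auto simp: field_simps)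
      then show ?thesis
        using m cheb_two_cos_pi_div_nonneg[OF m(1)]
        by (intro from_cheb[of "2 * cos (pi / real m)"]) (auto simp: power2_eq_square)
    qed
  qed
qed

section \<open>The Coxeter group acts on the geometric representation\<close>

locale egcm =
  fixes n :: nat and M :: "nat \<Rightarrow> nat \<Rightarrow> real"
  assumes is_egcm: "is_egcm n M"
begin

lemma diag_eq_two: "i < n \<Longrightarrow> M i i = 2"
  using is_egcm unfolding is_egcm_def by blast

lemma off_diag_nonpos: "i < n \<Longrightarrow> j < n \<Longrightarrow> i \<noteq> j \<Longrightarrow> M i j \<le> 0"
  using is_egcm unfolding is_egcm_def by blast

lemma off_diag_zero_iff: "i < n \<Longrightarrow> j < n \<Longrightarrow> M i j = 0 \<longleftrightarrow> M j i = 0"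
  using is_egcm unfolding is_egcm_def by blast

lemma off_diag_product_cases:
  assumes "i < n" "j < n" "i \<noteq> j"
  shows "4 \<le> M i j * M j i \<or> (\<exists>m\<ge>2. M i j * M j i = 4 * (cos (pi / real m))\<^sup>2)"
proof (cases "M i j * M j i = 0")
  case True
  then have "M i j * M j i = 4 * (cos (pi / real (2::nat)))\<^sup>2"
    by simp
  then show ?thesis by (metis order_refl)
next
  case False
  then show ?thesis
    using is_egcm assms unfolding is_egcm_def
    by (metis (no_types) Suc_leD numeral_3_eq_3 numeral_2_eq_2)
qed

lemma reflect_reflect: "a < n \<Longrightarrow> reflect n M a (reflect n M a b) = b"
proof -
  assume a: "a < n"
  define S where "S = (\<Sum>l<n. M a l * b l)"
  have "(\<Sum>l<n. M a l * reflect n M a b l) = - S"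
    unfolding reflect_def S_def using sum_mult_fun_upd[OF a] diag_eq_two[OF a] by simp
  then show ?thesis
    unfolding reflect_def[of n M a "reflect n M a b"] by (auto simp: reflect_def S_def)
qed

lemma reflect_simple_root_self: "i < n \<Longrightarrow> reflect n M i (simple_root i) = (\<lambda>k. - simple_root i k)"
  using sum_mult_simple_root[of i n "M i"] diag_eq_two[of i]
  by (auto simp: reflect_def simple_root_def)

lemma word_act_rev_cancel: "set u \<subseteq> {..<n} \<Longrightarrow> word_act n M (rev u) (word_act n M u b) = b"
  by (induction u arbitrary: b) (auto simp: word_act_append reflect_reflect)

definition off_pair_sum :: "nat \<Rightarrow> nat \<Rightarrow> nat \<Rightarrow> (nat \<Rightarrow> real) \<Rightarrow> real" where
  "off_pair_sum i j x b = (\<Sum>l\<in>{..<n} - {i, j}. M x l * b l)"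

lemma reflect_reflect_pair:
  assumes ij: "i < n" "j < n" "i \<noteq> j"
  shows "reflect n M i (reflect n M j b) =
    (let d = rot_aff (M i j) (M j i) (off_pair_sum i j i b) (off_pair_sum i j j b) (b i, b j)
     in b(i := fst d, j := snd d))"
proof -
  define c where "c = reflect n M j b"
  have c_j: "c j = - b j - M j i * b i - off_pair_sum i j j b"
    unfolding c_def reflect_def off_pair_sum_def
    using sum_lessThan_split_pair[OF ij, of "\<lambda>l. M j l * b l"] diag_eq_two[OF ij(2)] ij by simp
  have c_other: "c l = b l" if "l \<noteq> j" for l
    unfolding c_def reflect_def using that by simp
  have "off_pair_sum i j i c = off_pair_sum i j i b"
    unfolding off_pair_sum_def using c_other by (intro sum.cong) auto
  then have "reflect n M i c i = - b i - M i j * c j - off_pair_sum i j i b"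
    unfolding reflect_def off_pair_sum_def
    using sum_lessThan_split_pair[OF ij, of "\<lambda>l. M i l * c l"] diag_eq_two[OF ij(1)] ij c_other
    by simp
  then show ?thesis
    using c_j c_other ij unfolding c_def[symmetric]
    by (auto simp: rot_aff_def Let_def reflect_def)
qed

lemma word_act_braid_power:
  assumes ij: "i < n" "j < n" "i \<noteq> j"
  shows "word_act n M (concat (replicate m [i, j])) b =
    (let d = (rot_aff (M i j) (M j i) (off_pair_sum i j i b) (off_pair_sum i j j b) ^^ m) (b i, b j)
     in b(i := fst d, j := snd d))"
proof (induction m)
  case (Suc m)
  define c where "c = word_act n M (concat (replicate m [i, j])) b"
  have c_other: "c l = b l" if "l \<noteq> i" "l \<noteq> j" for l
    using Suc that unfolding c_def by (simp add: Let_def)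
  have "off_pair_sum i j x c = off_pair_sum i j x b" for x
    unfolding off_pair_sum_def using c_other by (intro sum.cong) auto
  moreover have "(c i, c j) =
      (rot_aff (M i j) (M j i) (off_pair_sum i j i b) (off_pair_sum i j j b) ^^ m) (b i, b j)"
    using Suc ij unfolding c_def by (simp add: Let_def)
  moreover have
    "word_act n M (concat (replicate (Suc m) [i, j])) b = reflect n M i (reflect n M j c)"
    unfolding c_def by simp
  ultimately show ?case
    using reflect_reflect_pair[OF ij, of c] c_other by (auto simp: Let_def)
qed (auto simp: Let_def)

lemma word_act_braid_relator:
  assumes ij: "i < n" "j < n" "i \<noteq> j" and k: "2 \<le> k"
    and PQ: "M i j * M j i = 4 * (cos (pi / real k))\<^sup>2"
  shows "word_act n M (concat (replicate k [i, j])) b = b"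
proof -
  have "(rot_aff (M i j) (M j i) p q ^^ k) x = x" for p q x
  proof (cases "k = 2")
    case True
    then have "M i j = 0" "M j i = 0"
      using PQ off_diag_zero_iff[OF ij(1,2)] by auto
    then show ?thesis using True by (simp add: rot_aff_def Let_def numeral_2_eq_2)
  next
    case False
    then show ?thesis using rot_aff_funpow_order[OF _ PQ] k by simp
  qed
  then show ?thesis unfolding word_act_braid_power[OF ij] by (simp add: Let_def)
qed

lemma word_act_relator: "cox_relator n M r \<Longrightarrow> word_act n M r b = b"
proof (induction rule: cox_relator.induct)
  case (sq i)
  then show ?case by (simp add: reflect_reflect)
next
  case (braid i j k)
  then show ?case by (rule word_act_braid_relator)
qed

lemma word_act_cong: "cox_eq n M u v \<Longrightarrow> word_act n M u = word_act n M v"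
proof (induction rule: cox_eq.induct)
  case (del r a b)
  then show ?case by (auto simp: word_act_append word_act_relator)
qed auto

end

section \<open>Positivity of roots\<close>

definition pair_vec :: "nat \<Rightarrow> nat \<Rightarrow> real \<Rightarrow> real \<Rightarrow> nat \<Rightarrow> real" where
  "pair_vec i j a b = (\<lambda>l. a * simple_root i l + b * simple_root j l)"

context egcm
begin

lemma reflect_pair_vec:
  assumes ij: "i < n" "j < n" "i \<noteq> j"
  shows "reflect n M j (pair_vec i j a b) = pair_vec i j a (- b - M j i * a)"
    and "reflect n M i (pair_vec i j a b) = pair_vec i j (- a - M i j * b) b"
proof -
  have sum: "(\<Sum>l<n. f l * pair_vec i j a b l) = a * f i + b * f j" for f
    using sum_mult_simple_root[OF ij(1), of f] sum_mult_simple_root[OF ij(2), of f]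
    by (simp add: pair_vec_def distrib_left sum.distrib mult.left_commute flip: sum_distrib_left)
  show "reflect n M j (pair_vec i j a b) = pair_vec i j a (- b - M j i * a)"
    unfolding reflect_def sum using ij diag_eq_two[of j]
    by (auto simp: pair_vec_def simple_root_def algebra_simps)
  show "reflect n M i (pair_vec i j a b) = pair_vec i j (- a - M i j * b) b"
    unfolding reflect_def sum using ij diag_eq_two[of i]
    by (auto simp: pair_vec_def simple_root_def algebra_simps)
qed

lemma word_act_rev_alt_word_simple_root:
  assumes ij: "i < n" "j < n" "i \<noteq> j"
  shows "word_act n M (rev (alt_word j i L)) (simple_root i) =
    pair_vec i j (fst (dihedral_coeffs (M i j) (M j i) L))
      (snd (dihedral_coeffs (M i j) (M j i) L))"
proof (induction L)
  case 0
  show ?case by (simp add: pair_vec_def)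
next
  case (Suc L)
  then show ?case by (simp add: alt_word_Suc reflect_pair_vec[OF ij])
qed

lemma word_act_dihedral:
  assumes ij: "i < n" "j < n" "i \<noteq> j" and y: "set y \<subseteq> {i, j}"
    and red: "cox_len n M (y @ [i]) = length y + 1"
  obtains a b where "0 \<le> a" "0 \<le> b" "word_act n M y (simple_root i) = pair_vec i j a b"
proof -
  define L where "L = length y"
  define z where "z = i # rev y"
  have z_red: "cox_len n M z = length z"
    using red cox_len_rev[of n M "y @ [i]"] by (simp add: z_def)
  have z_set: "set z \<subseteq> {i, j}"
    using y by (simp add: z_def)
  then have "set z \<subseteq> {..<n}"
    using ij by auto
  then have z_alt: "z = alt_word i j (Suc L)"
    using eq_alt_word_if_no_adjacent_repeats[OF ij(3) z_set] reduced_nth_neq_nth_Suc[OF z_red]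
    by (simp add: z_def L_def)
  then have y_alt: "y = rev (alt_word j i L)"
    by (simp add: z_def alt_word_Suc_Cons flip: rev_swap)
  have "L < m" if "2 \<le> m" "M i j * M j i = 4 * (cos (pi / real m))\<^sup>2" for m
  proof -
    have "cox_relator n M (concat (replicate m [i, j]))"
      using that ij by (intro cox_relator.braid) auto
    then have "Suc L \<le> m"
      using reduced_alt_word_length_le[of n M m i j "Suc L"] z_red z_alt ij that by simp
    then show ?thesis by simp
  qed
  then have "0 \<le> fst (dihedral_coeffs (M i j) (M j i) L) \<and>
      0 \<le> snd (dihedral_coeffs (M i j) (M j i) L)"
    using off_diag_product_cases[OF ij] off_diag_nonpos ij
    by (intro dihedral_coeffs_nonneg) (auto simp: L_def)
  then show ?thesis
    using that word_act_rev_alt_word_simple_root[OF ij, of L] y_alt by auto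
qed

lemma word_act_simple_root_nonneg:
  assumes "cox_len n M w < cox_len n M (w @ [i])" "set w \<subseteq> {..<n}" "i < n"
  shows "0 \<le> word_act n M w (simple_root i) l"
  using assms
proof (induction "cox_len n M w" arbitrary: w i l rule: less_induct)
  case less
  show ?case
  proof (cases "cox_len n M w = 0")
    case True
    obtain v where "cox_eq n M w v" "length v = cox_len n M w"
      by (rule obtain_reduced_form)
    then have "word_act n M w = word_act n M []"
      using True word_act_cong by simp
    then show ?thesis by (simp add: simple_root_def)
  next
    case False
    obtain w' j where w': "cox_eq n M w (w' @ [j])" "cox_len n M w' + 1 = cox_len n M w"
      "set w' \<subseteq> {..<n}" "j < n"
      using obtain_reduced_snoc[OF less.prems(2) False] by blast
    have "j \<noteq> i"
      using right_descent_neq_right_ascent[OF w'(1,2) less.prems(1,3)] .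
    obtain v y where v: "set v \<subseteq> {..<n}" "set y \<subseteq> {i, j}" "cox_eq n M (v @ y) w"
        "cox_len n M v + length y = cox_len n M w" "cox_len n M v \<le> cox_len n M w'"
      and ascent: "\<And>x. x \<in> {i, j} \<Longrightarrow> cox_len n M v < cox_len n M (v @ [x])"
      using exists_ascending_factorization[of "{i, j}" n w' "[j]" M w] w' less.prems(3)
      by (auto intro: cox_eq.sym)
    have IH: "0 \<le> word_act n M v (simple_root x) k" if "x \<in> {i, j}" for x k
      using less.hyps[OF _ ascent[OF that] v(1)] v(5) w'(2) less.prems(3) w'(4) that by auto
    have "cox_len n M (w @ [i]) = cox_len n M w + 1"
      using cox_len_snoc[OF less.prems(3), of M w] less.prems(1) by linarith
    then obtain a b where "0 \<le> a" "0 \<le> b" "word_act n M y (simple_root i) = pair_vec i j a b"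
      using word_act_dihedral[OF less.prems(3) w'(4) \<open>j \<noteq> i\<close>[symmetric] v(2)]
        cox_len_snoc_right_factor[OF v(3,4)] by blast
    moreover have "word_act n M w = word_act n M (v @ y)"
      using word_act_cong[OF v(3)] by simp
    ultimately show ?thesis
      using IH[of i l] IH[of j l] by (simp add: word_act_append pair_vec_def word_act_linear)
  qed
qed

lemma word_act_nonneg_if_supported_on_ascents:
  assumes "set v \<subseteq> {..<n}" "\<And>l. 0 \<le> b l"
    and "\<And>l. b l \<noteq> 0 \<Longrightarrow> l < n \<and> cox_len n M v < cox_len n M (v @ [l])"
  shows "0 \<le> word_act n M v b k"
proof -
  have "\<forall>l\<ge>n. b l = 0"
    using assms(3) by force
  then have "word_act n M v b k = (\<Sum>l<n. b l * word_act n M v (simple_root l) k)"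
    by (rule word_act_expand)
  also have "0 \<le> \<dots>"
    using assms word_act_simple_root_nonneg
    by (intro sum_nonneg) (metis mult_eq_0_iff mult_nonneg_nonneg order_refl)
  finally show ?thesis .
qed

end

context egcm
begin

lemma foldl_fire_rev_pos:
  assumes J: "J \<subseteq> {..<n}" and red: "reduced n M (i # u)" and min: "in_min_coset n M J (i # u)"
    and lam: "lam \<in> cone_C n J"
  shows "0 < foldl (fire M) lam (rev u) i"
proof -
  have u: "set (rev u) \<subseteq> {..<n}" "i < n" and len: "cox_len n M (i # u) = Suc (length u)"
    using red by (auto simp: reduced_def)
  define root where "root = word_act n M (rev u) (simple_root i)"
  have "cox_len n M (rev u @ [i]) = Suc (length u)"
    using len cox_len_rev[of n M "i # u"] by simp
  then have root_nonneg: "0 \<le> root l" for l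
    unfolding root_def using word_act_simple_root_nonneg[OF _ u] cox_len_le_length[of n M "rev u"]
    by simp
  have root_support: "\<forall>l\<ge>n. root l = 0"
    unfolding root_def using word_act_vanishes[of "rev u" n "simple_root i" _ M] u
    by (auto simp: simple_root_def)
  have "word_act n M (i # u) root = (\<lambda>k. - simple_root i k)"
    unfolding root_def using word_act_rev_cancel[OF u(1)] reflect_simple_root_self[OF u(2)] by simp
  then have "\<not> 0 \<le> word_act n M (i # u) root i"
    by (simp add: simple_root_def)
  then obtain l where "root l \<noteq> 0" "\<not> (l < n \<and> cox_len n M (i # u) < cox_len n M ((i # u) @ [l]))"
    using word_act_nonneg_if_supported_on_ascents[of "i # u" root i] u root_nonneg by auto
  then have l: "l < n" "l \<notin> J" "0 < root l"
    using root_support root_nonneg[of l] min by (auto simp: in_min_coset_def not_le)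
  have "0 < (\<Sum>l<n. lam l * root l)"
  proof (rule sum_pos2)
    show "0 < lam l * root l"
      using l lam by (simp add: cone_C_def)
    have "0 \<le> lam k" if "k < n" for k
      using that lam by (cases "k \<in> J") (auto simp: cone_C_def less_imp_le)
    then show "0 \<le> lam k * root k" if "k \<in> {..<n}" for k
      using that root_nonneg[of k] by simp
  qed (use l in auto)
  then show ?thesis
    unfolding root_def using foldl_fire_eq_pairing[OF u] by simp
qed

end

theorem proposition5p2:
  fixes n :: nat and M :: "nat \<Rightarrow> nat \<Rightarrow> real" and J :: "nat set"
    and w :: "nat list" and lam :: "nat \<Rightarrow> real"
  assumes "is_egcm n M"
    and "J \<subseteq> {..<n}"
    and "finite (parabolic n M J)"
    and "reduced n M w"
    and "in_min_coset n M J w"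
    and "lam \<in> cone_C n J"
  shows "\<forall>q. 1 \<le> q \<and> q \<le> length w \<longrightarrow> legal M lam (take q (rev w))"
proof -
  interpret egcm n M
    by unfold_locales (rule assms(1))
  have "legal M lam (rev w)"
  proof (rule legal_if_prefixes_positive)
    fix xs i ys
    assume "rev w = xs @ i # ys"
    then have w: "w = rev ys @ i # rev xs"
      by (metis rev_append rev_rev_ident append_Cons append_Nil rev.simps(2) append_assoc)
    show "0 < foldl (fire M) lam xs i"
      using foldl_fire_rev_pos[OF assms(2), of i "rev xs" lam]
        reduced_append_right[of n M "rev ys" "i # rev xs"]
        in_min_coset_append_right[of n M "rev ys" "i # rev xs" J] assms(2,4,5,6)
      unfolding w by simp
  qed
  then show ?thesis
    using legal_take by blast
qed

end
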